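(* Let $K\ge d>0$ and $T\ge2$. Let $s=(s_t)_{1\le t\le T}$ be a $d$-dimensional Markov chain with $s_1\sim\mathcal{N}(m,\Phi)$ and, conditionally on $s_t$, $s_{t+1}\sim\mathcal{N}(Bs_t+b,\Psi)$, where $B$ is diagonal with non-zero pairwise distinct diagonal entries, $\Phi,\Psi$ are diagonal with positive diagonal entries, and $m,b\in\mathbb{R}^d$. Let $w_t=\Gamma s_t$ with $\Gamma\in\mathbb{R}^{K\times d}$ of rank $d$. Let $(\tilde w,\tilde s)$ be built similarly with parameters $\tilde m,\tilde\Phi,\tilde B,\tilde b,\tilde\Psi$ (with $\tilde B,\tilde\Phi,\tilde\Psi$ diagonal with non-zero diagonal entries, $\tilde \Phi,\tilde\Psi$ positive) and $\tilde\Gamma$ of rank $d$. If $w=(w_t)_{1\le t\le T}$ and $\tilde w$ have the same distribution, then there exist a permutation matrix $P\in\mathbb{R}^{d\times d}$ and an invertible diagonal matrix $D$ such that $\tilde\Gamma=\Gamma PD^{-1}$, $\tilde B=DP^\top BPD^{-1}$, $\tilde\Phi=DP^\top\Phi PD$, $\tilde\Psi=DP^\top\Psi PD$, $\tilde b=DP^\top b$, $\tilde m=DP^\top m$.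
   Context: $\mathcal{N}(\mu,\Sigma)$ denotes the Gaussian distribution with mean $\mu$ and covariance $\Sigma$. *)

theory Defs
  imports "HOL-Analysis.Analysis" "HOL-Probability.Probability"
begin

definition mvn_density :: "real^'d \<Rightarrow> real^'d^'d \<Rightarrow> real^'d \<Rightarrow> real" where
  "mvn_density \<mu> \<Sigma> x =
     exp (- (1/2) * ((x - \<mu>) \<bullet> (matrix_inv \<Sigma> *v (x - \<mu>))))
     / sqrt ((2 * pi) ^ CARD('d) * det \<Sigma>)"

definition state_law :: "nat \<Rightarrow> real^'d \<Rightarrow> real^'d^'d \<Rightarrow> real^'d^'d \<Rightarrow> real^'d \<Rightarrow> real^'d^'d
    \<Rightarrow> (nat \<Rightarrow> real^'d) measure" where
  "state_law T m \<Phi> B b \<Psi> =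
     density (PiM {1..T} (\<lambda>_. lborel))
       (\<lambda>s. ennreal (mvn_density m \<Phi> (s 1) *
                      (\<Prod>t\<in>{1..<T}. mvn_density (B *v s t + b) \<Psi> (s (Suc t)))))"

definition obs_law :: "nat \<Rightarrow> real^'d^'k \<Rightarrow> real^'d \<Rightarrow> real^'d^'d \<Rightarrow> real^'d^'d \<Rightarrow> real^'d
    \<Rightarrow> real^'d^'d \<Rightarrow> (nat \<Rightarrow> real^'k) measure" where
  "obs_law T \<Gamma> m \<Phi> B b \<Psi> =
     distr (state_law T m \<Phi> B b \<Psi>) (PiM {1..T} (\<lambda>_. borel)) (\<lambda>s. \<lambda>t\<in>{1..T}. \<Gamma> *v s t)"

definition diag_mat :: "real^'d^'d \<Rightarrow> bool" where
  "diag_mat A \<longleftrightarrow> (\<forall>i j. i \<noteq> j \<longrightarrow> A $ i $ j = 0)"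

definition perm_mat :: "real^'d^'d \<Rightarrow> bool" where
  "perm_mat P \<longleftrightarrow> (\<exists>p. p permutes (UNIV :: 'd set) \<and> P = (\<chi> i j. if i = p j then 1 else 0))"

end

theory Submission
  imports Defs
begin

(*
  Integrating out the states s_T, ..., s_3 and then s_2, s_1 shows that the pair (w_1, w_2) is
  Gaussian with means \<Gamma>m, \<Gamma>(Bm + b) and covariances \<Gamma>\<Phi>\<Gamma>^T, \<Gamma>\<Phi>B^T\<Gamma>^T,
  \<Gamma>(B\<Phi>B^T + \<Psi>)\<Gamma>^T; its moment generating function determines these five quantities.
  Equating them for the two models and using that \<Gamma> and \<Gamma>' have rank d gives
  \<Gamma>' = \<Gamma>C for an invertible C with \<Phi> = C\<Phi>'C^T, \<Psi> = C\<Psi>'C^T, b = Cb', m = Cm' and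
  BC = CB'. Since B is diagonal with distinct entries and B' is diagonal, BC = CB' forces C to have
  exactly one non-zero entry in every row and column, i.e. C = PD^-1.
*)

section \<open>Matrices\<close>

lemma matrix_add_rdistrib: "((A::'a::semiring_1^'n^'m) + B) ** C = A ** C + B ** C"
  by (simp add: matrix_matrix_mult_def vec_eq_iff sum.distrib distrib_right)

lemma diag_mat_transpose: "diag_mat A \<Longrightarrow> transpose A = A"
  unfolding diag_mat_def transpose_def vec_eq_iff by (metis vec_lambda_beta)

lemma diag_mat_mult_left:
  assumes "diag_mat A"
  shows "(A ** M) $ i $ j = A $ i $ i * M $ i $ j"
proof -
  have "(A ** M) $ i $ j = (\<Sum>k\<in>UNIV. A $ i $ k * M $ k $ j)"
    by (simp add: matrix_matrix_mult_def)
  also have "\<dots> = (\<Sum>k\<in>UNIV. if k = i then A $ i $ i * M $ i $ j else 0)"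
    by (rule sum.cong) (use assms in \<open>auto simp: diag_mat_def\<close>)
  finally show ?thesis by simp
qed

lemma diag_mat_mult_right:
  assumes "diag_mat A"
  shows "(M ** A) $ i $ j = M $ i $ j * A $ j $ j"
proof -
  have "(M ** A) $ i $ j = (\<Sum>k\<in>UNIV. M $ i $ k * A $ k $ j)"
    by (simp add: matrix_matrix_mult_def)
  also have "\<dots> = (\<Sum>k\<in>UNIV. if k = j then M $ i $ j * A $ j $ j else 0)"
    by (rule sum.cong) (use assms in \<open>auto simp: diag_mat_def\<close>)
  finally show ?thesis by simp
qed

lemma diag_mat_mult_vec:
  assumes "diag_mat A"
  shows "(A *v x) $ i = A $ i $ i * x $ i"
proof -
  have "(A *v x) $ i = (\<Sum>k\<in>UNIV. A $ i $ k * x $ k)"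
    by (simp add: matrix_vector_mult_def)
  also have "\<dots> = (\<Sum>k\<in>UNIV. if k = i then A $ i $ i * x $ i else 0)"
    by (rule sum.cong) (use assms in \<open>auto simp: diag_mat_def\<close>)
  finally show ?thesis by simp
qed

lemma matrix_inv_works:
  assumes "invertible A"
  shows "A ** matrix_inv A = mat 1" "matrix_inv A ** A = mat 1"
  using someI_ex[OF assms[unfolded invertible_def]] unfolding matrix_inv_def by auto

lemma matrix_inv_unique:
  fixes A :: "real^'n^'n"
  assumes "A ** A' = mat 1" "A' ** A = mat 1"
  shows "matrix_inv A = A'"
proof -
  have "invertible A" using assms invertible_def by blast
  have "matrix_inv A = matrix_inv A ** (A ** A')"
    by (simp add: assms(1))
  also have "\<dots> = A'"
    by (simp add: matrix_mul_assoc matrix_inv_works(2)[OF \<open>invertible A\<close>])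
  finally show ?thesis .
qed

lemma diag_mat_inverse:
  fixes A :: "real^'n^'n"
  assumes "diag_mat A" "\<forall>i. A $ i $ i \<noteq> 0"
  defines "A' \<equiv> \<chi> i j. if i = j then 1 / A $ i $ i else 0"
  shows "A ** A' = mat 1" "A' ** A = mat 1"
  using assms by (simp_all add: vec_eq_iff mat_def diag_mat_mult_left diag_mat_mult_right)

lemma matrix_inv_diag_mat:
  fixes A :: "real^'n^'n"
  assumes "diag_mat A" "\<forall>i. A $ i $ i \<noteq> 0"
  shows "matrix_inv A = (\<chi> i j. if i = j then 1 / A $ i $ i else 0)"
  using matrix_inv_unique diag_mat_inverse[OF assms] by blast

lemma invertible_diag_mat:
  fixes A :: "real^'n^'n"
  assumes "diag_mat A" "\<forall>i. A $ i $ i \<noteq> 0"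
  shows "invertible A"
  using diag_mat_inverse[OF assms] invertible_def by blast

lemma perm_mat_transpose_mult:
  assumes "perm_mat P"
  shows "transpose P ** P = mat 1"
proof -
  obtain p where p: "p permutes UNIV" and P: "P = (\<chi> i j. if i = p j then 1 else 0)"
    using assms perm_mat_def by blast
  have "p i = p j \<longleftrightarrow> i = j" for i j
    using permutes_inj[OF p] by (auto dest: injD)
  then show ?thesis
    by (simp add: P vec_eq_iff mat_def matrix_matrix_mult_def transpose_def
        if_distrib[of "\<lambda>z. z * _"] cong: if_cong)
qed

lemma invertible_column_nonzero:
  fixes C :: "real^'n^'n"
  assumes "invertible C"
  shows "\<exists>i. C $ i $ j \<noteq> 0"
proof (rule ccontr)
  assume "\<nexists>i. C $ i $ j \<noteq> 0"
  then have "C *v axis j 1 = C *v 0"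
    by (simp add: matrix_vector_mult_basis column_def vec_eq_iff)
  then have "axis j (1::real) = 0"
    using inj_matrix_vector_mult[OF assms] by (metis injD)
  then show False by simp
qed

lemma full_rank_left_inverse:
  fixes \<Gamma> :: "real^'d^'k"
  assumes "rank \<Gamma> = CARD('d)"
  obtains L where "L ** \<Gamma> = mat 1"
  using matrix_left_invertible_injective full_rank_injective assms by blast

lemma congruence_cancel:
  fixes L :: "real^'k^'d" and \<Gamma> :: "real^'d^'k" and M N :: "real^'d^'d"
  assumes L: "L ** \<Gamma> = mat 1" and eq: "\<Gamma> ** M ** transpose \<Gamma> = \<Gamma> ** N ** transpose \<Gamma>"
  shows "M = N"
proof -
  have L': "transpose \<Gamma> ** transpose L = mat 1"
    using L by (metis matrix_transpose_mul transpose_mat)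
  have "M = L ** (\<Gamma> ** M ** transpose \<Gamma>) ** transpose L"
    by (simp add: matrix_mul_assoc L) (simp add: matrix_mul_assoc[symmetric] L')
  also have "\<dots> = L ** (\<Gamma> ** N ** transpose \<Gamma>) ** transpose L"
    by (simp only: eq)
  also have "\<dots> = N"
    by (simp add: matrix_mul_assoc L) (simp add: matrix_mul_assoc[symmetric] L')
  finally show ?thesis .
qed

lemma symmetric_congruence:
  fixes A :: "real^'n^'m" and M :: "real^'n^'n"
  shows "transpose M = M \<Longrightarrow> transpose (A ** M ** transpose A) = A ** M ** transpose A"
  by (simp add: matrix_transpose_mul matrix_mul_assoc)

lemma symmetric_matrix_eqI:
  fixes P Q :: "real^'n^'n"
  assumes "transpose P = P" "transpose Q = Q" and quad: "\<And>x. x \<bullet> (P *v x) = x \<bullet> (Q *v x)"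
  shows "P = Q"
proof -
  have swap: "y \<bullet> (A *v x) = x \<bullet> (A *v y)" if "transpose A = A" for A :: "real^'n^'n" and x y
    by (metis that dot_lmul_matrix inner_commute transpose_matrix_vector)
  have "x \<bullet> (P *v y) = x \<bullet> (Q *v y)" for x y
    using quad[of "x + y"] quad[of x] quad[of y] swap[OF assms(1)] swap[OF assms(2)]
    by (simp add: matrix_vector_right_distrib inner_add_left inner_add_right)
  then show ?thesis unfolding matrix_eq using vector_eq_ldot by blast
qed

lemma linear_quadratic_coeffs_unique:
  fixes p p' :: "real^'n" and P P' :: "real^'n^'n"
  assumes "transpose P = P" "transpose P' = P'"
    and eq: "\<And>x. x \<bullet> p + x \<bullet> (P *v x) / 2 = x \<bullet> p' + x \<bullet> (P' *v x) / 2"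
  shows "p = p' \<and> P = P'"
proof -
  have neg: "A *v (- x) = - (A *v x)" for A :: "real^'n^'n" and x
    by (simp add: matrix_vector_mult_def vec_eq_iff sum_negf)
  have "x \<bullet> p = x \<bullet> p'" for x
    using eq[of x] eq[of "- x"] by (simp add: neg)
  then have "p = p'" using vector_eq_ldot by blast
  moreover have "P = P'"
    by (rule symmetric_matrix_eqI[OF assms(1,2)]) (use eq \<open>p = p'\<close> in simp)
  ultimately show ?thesis ..
qed

lemma linear_quadratic2_coeffs_unique:
  fixes p q p' q' :: "real^'n" and P R S P' R' S' :: "real^'n^'n"
  assumes "transpose P = P" "transpose S = S" "transpose P' = P'" "transpose S' = S'"
    and eq: "\<And>u v. u \<bullet> p + v \<bullet> q + (u \<bullet> (P *v u) + 2 * (u \<bullet> (R *v v)) + v \<bullet> (S *v v)) / 2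
                  = u \<bullet> p' + v \<bullet> q' + (u \<bullet> (P' *v u) + 2 * (u \<bullet> (R' *v v)) + v \<bullet> (S' *v v)) / 2"
  shows "p = p' \<and> q = q' \<and> P = P' \<and> R = R' \<and> S = S'"
proof -
  have pP: "p = p' \<and> P = P'"
    by (rule linear_quadratic_coeffs_unique[OF assms(1,3)]) (use eq[of _ 0] in simp)
  have qS: "q = q' \<and> S = S'"
    by (rule linear_quadratic_coeffs_unique[OF assms(2,4)]) (use eq[of 0] in simp)
  have "u \<bullet> (R *v v) = u \<bullet> (R' *v v)" for u v
    using eq[of u v] pP qS by simp
  then have "R = R'" unfolding matrix_eq using vector_eq_ldot by blast
  with pP qS show ?thesis by blast
qed

section \<open>Gaussian densities with diagonal covariance\<close>

lemma sqrt_prod: "sqrt (prod f A) = (\<Prod>i\<in>A. sqrt (f i))"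
  by (induction A rule: infinite_finite_induct) (simp_all add: real_sqrt_mult)

lemma mvn_density_diag:
  fixes \<Sigma> :: "real^'d^'d"
  assumes "diag_mat \<Sigma>" "\<forall>i. \<Sigma> $ i $ i > 0"
  shows "mvn_density \<mu> \<Sigma> x = (\<Prod>i\<in>UNIV. normal_density (\<mu> $ i) (sqrt (\<Sigma> $ i $ i)) (x $ i))"
proof -
  have "\<forall>i. \<Sigma> $ i $ i \<noteq> 0" using assms(2) by (metis less_irrefl)
  then have quad: "(x - \<mu>) \<bullet> (matrix_inv \<Sigma> *v (x - \<mu>)) = (\<Sum>i\<in>UNIV. (x $ i - \<mu> $ i)\<^sup>2 / \<Sigma> $ i $ i)"
    by (simp add: matrix_inv_diag_mat[OF assms(1)] inner_vec_def matrix_vector_mult_def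
        if_distrib[of "\<lambda>z. z * _"] power2_eq_square cong: if_cong)
  have "det \<Sigma> = (\<Prod>i\<in>UNIV. \<Sigma> $ i $ i)"
    by (rule det_diagonal) (use assms(1) in \<open>simp add: diag_mat_def\<close>)
  then have "(2 * pi) ^ CARD('d) * det \<Sigma> = (\<Prod>i\<in>UNIV. 2 * pi * (sqrt (\<Sigma> $ i $ i))\<^sup>2)"
    using assms(2) by (simp add: prod.distrib less_imp_le)
  then have norm: "sqrt ((2 * pi) ^ CARD('d) * det \<Sigma>) = (\<Prod>i\<in>UNIV. sqrt (2 * pi * (sqrt (\<Sigma> $ i $ i))\<^sup>2))"
    by (simp add: sqrt_prod)
  have "exp (- (1/2) * (\<Sum>i\<in>UNIV. (x $ i - \<mu> $ i)\<^sup>2 / \<Sigma> $ i $ i))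
      = (\<Prod>i\<in>UNIV. exp (- (x $ i - \<mu> $ i)\<^sup>2 / (2 * (sqrt (\<Sigma> $ i $ i))\<^sup>2)))"
    using assms(2) by (simp add: sum_distrib_left exp_sum less_imp_le)
  then show ?thesis
    unfolding mvn_density_def quad norm normal_density_def by (simp add: prod.distrib prod_dividef)
qed

lemma nn_integral_normal_density_exp:
  assumes "\<sigma> > 0"
  shows "(\<integral>\<^sup>+ t. ennreal (normal_density \<mu> \<sigma> t * exp (c * t)) \<partial>lborel)
       = ennreal (exp (c * \<mu> + \<sigma>\<^sup>2 * c\<^sup>2 / 2))"
proof -
  have square: "normal_density \<mu> \<sigma> t * exp (c * t)
      = exp (c * \<mu> + \<sigma>\<^sup>2 * c\<^sup>2 / 2) * normal_density (\<mu> + \<sigma>\<^sup>2 * c) \<sigma> t" for t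
  proof -
    have "- (t - \<mu>)\<^sup>2 / (2 * \<sigma>\<^sup>2) + c * t
        = (c * \<mu> + \<sigma>\<^sup>2 * c\<^sup>2 / 2) + (- (t - (\<mu> + \<sigma>\<^sup>2 * c))\<^sup>2 / (2 * \<sigma>\<^sup>2))"
      using assms by (simp add: field_simps power2_eq_square)
    then show ?thesis
      unfolding normal_density_def by (simp add: exp_add[symmetric] mult.assoc mult.left_commute[of "exp _"])
  qed
  have "(\<integral>\<^sup>+ t. ennreal (normal_density (\<mu> + \<sigma>\<^sup>2 * c) \<sigma> t) \<partial>lborel) = 1"
    using assms by (subst nn_integral_eq_integral) auto
  then show ?thesis by (simp add: square ennreal_mult nn_integral_cmult)
qed

lemma nn_integral_lborel_vec_prod:
  fixes g :: "'d::finite \<Rightarrow> real \<Rightarrow> real"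
  assumes [measurable]: "\<And>i. g i \<in> borel_measurable borel" and nonneg: "\<And>i t. 0 \<le> g i t"
  shows "(\<integral>\<^sup>+ x. ennreal (\<Prod>i\<in>UNIV. g i ((x::real^'d) $ i)) \<partial>lborel)
       = (\<Prod>i\<in>UNIV. \<integral>\<^sup>+ t. ennreal (g i t) \<partial>lborel)"
proof -
  define f where "f b t = ennreal (g (axis_index b) t)" for b :: "real^'d" and t
  have Basis_prod: "(\<Prod>b\<in>Basis. h b) = (\<Prod>i\<in>UNIV. h (axis i (1::real)))" for h :: "real^'d \<Rightarrow> ennreal"
    by (simp add: Basis_vec_def UNION_singleton_eq_range prod.reindex axis_eq_axis inj_on_def)
  have "(\<integral>\<^sup>+ x. (\<Prod>b\<in>Basis. f b (x \<bullet> b)) \<partial>lborel) = (\<Prod>b\<in>Basis. \<integral>\<^sup>+ x. f b x \<partial>lborel)"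
    by (rule nn_integral_lborel_prod) (auto simp: f_def)
  moreover have "(\<Prod>b\<in>Basis. f b (x \<bullet> b)) = ennreal (\<Prod>i\<in>UNIV. g i (x $ i))" for x :: "real^'d"
    by (simp add: Basis_prod f_def inner_axis prod_ennreal nonneg)
  ultimately show ?thesis by (simp add: Basis_prod f_def)
qed

definition gauss_cgf :: "real^'n \<Rightarrow> real^'n^'n \<Rightarrow> real^'n \<Rightarrow> real" where
  "gauss_cgf \<mu> \<Sigma> c = c \<bullet> \<mu> + c \<bullet> (\<Sigma> *v c) / 2"

lemma nn_integral_mvn_density_exp:
  fixes \<Sigma> :: "real^'d^'d"
  assumes "diag_mat \<Sigma>" "\<forall>i. \<Sigma> $ i $ i > 0"
  shows "(\<integral>\<^sup>+ x. ennreal (mvn_density \<mu> \<Sigma> x * exp (c \<bullet> x)) \<partial>lborel) = ennreal (exp (gauss_cgf \<mu> \<Sigma> c))"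
proof -
  have factor: "mvn_density \<mu> \<Sigma> x * exp (c \<bullet> x)
      = (\<Prod>i\<in>UNIV. normal_density (\<mu> $ i) (sqrt (\<Sigma> $ i $ i)) (x $ i) * exp (c $ i * x $ i))" for x
    by (simp add: mvn_density_diag[OF assms] inner_vec_def exp_sum prod.distrib)
  have "(\<integral>\<^sup>+ x. ennreal (mvn_density \<mu> \<Sigma> x * exp (c \<bullet> x)) \<partial>lborel)
      = (\<Prod>i\<in>UNIV. \<integral>\<^sup>+ t. ennreal (normal_density (\<mu> $ i) (sqrt (\<Sigma> $ i $ i)) t * exp (c $ i * t)) \<partial>lborel)"
    unfolding factor by (rule nn_integral_lborel_vec_prod) auto
  also have "\<dots> = (\<Prod>i\<in>UNIV. ennreal (exp (c $ i * \<mu> $ i + \<Sigma> $ i $ i * (c $ i)\<^sup>2 / 2)))"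
    using assms(2) by (simp add: nn_integral_normal_density_exp less_imp_le)
  also have "\<dots> = ennreal (exp (gauss_cgf \<mu> \<Sigma> c))"
    by (simp add: prod_ennreal exp_sum[symmetric] gauss_cgf_def inner_vec_def diag_mat_mult_vec[OF assms(1)]
        sum.distrib sum_divide_distrib power2_eq_square mult_ac)
  finally show ?thesis .
qed

lemma nn_integral_mvn_density:
  fixes \<Sigma> :: "real^'d^'d"
  assumes "diag_mat \<Sigma>" "\<forall>i. \<Sigma> $ i $ i > 0"
  shows "(\<integral>\<^sup>+ x. ennreal (mvn_density \<mu> \<Sigma> x) \<partial>lborel) = 1"
  using nn_integral_mvn_density_exp[OF assms, of \<mu> 0] by (simp add: gauss_cgf_def)

lemma mvn_density_nonneg:
  fixes \<Sigma> :: "real^'d^'d"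
  assumes "diag_mat \<Sigma>" "\<forall>i. \<Sigma> $ i $ i > 0"
  shows "0 \<le> mvn_density \<mu> \<Sigma> x"
  by (simp add: mvn_density_diag[OF assms] prod_nonneg)

lemma borel_measurable_matrix_vector_mult[measurable]:
  "(\<lambda>x. (A::real^'n^'m) *v x) \<in> borel_measurable borel"
  by (intro borel_measurable_continuous_onI linear_continuous_on matrix_vector_mul_bounded_linear)

lemma borel_measurable_mvn_density[measurable]:
  assumes [measurable]: "f \<in> borel_measurable M" "g \<in> borel_measurable M"
  shows "(\<lambda>x. mvn_density (f x) \<Sigma> (g x)) \<in> borel_measurable M"
  unfolding mvn_density_def by measurable

section \<open>The moment generating function of the first two observations\<close>

definition state_density :: "nat \<Rightarrow> real^'d \<Rightarrow> real^'d^'d \<Rightarrow> real^'d^'d \<Rightarrow> real^'d \<Rightarrow> real^'d^'d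
    \<Rightarrow> (nat \<Rightarrow> real^'d) \<Rightarrow> real" where
  "state_density T m \<Phi> B b \<Psi> s =
     mvn_density m \<Phi> (s 1) * (\<Prod>t\<in>{1..<T}. mvn_density (B *v s t + b) \<Psi> (s (Suc t)))"

lemma state_law_eq_density:
  "state_law T m \<Phi> B b \<Psi> = density (PiM {1..T} (\<lambda>_. lborel)) (\<lambda>s. ennreal (state_density T m \<Phi> B b \<Psi> s))"
  unfolding state_law_def state_density_def by (rule refl)

lemma measurable_component_lborel:
  "t \<in> I \<Longrightarrow> (\<lambda>s. s t) \<in> borel_measurable (PiM I (\<lambda>_. lborel :: 'a::euclidean_space measure))"
  using measurable_component_singleton[of t I "\<lambda>_. lborel :: 'a measure"] by simp

lemma borel_measurable_state_density:
  assumes "1 \<le> T"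
  shows "state_density T m \<Phi> B b \<Psi> \<in> borel_measurable (PiM {1..T} (\<lambda>_. lborel))"
proof -
  have "(\<lambda>s. mvn_density (B *v s t + b) \<Psi> (s (Suc t))) \<in> borel_measurable (PiM {1..T} (\<lambda>_. lborel))"
    if "t \<in> {1..<T}" for t
  proof -
    have [measurable]: "(\<lambda>s. s t) \<in> borel_measurable (PiM {1..T} (\<lambda>_. lborel :: (real^'d) measure))"
      "(\<lambda>s. s (Suc t)) \<in> borel_measurable (PiM {1..T} (\<lambda>_. lborel :: (real^'d) measure))"
      using that by (auto intro!: measurable_component_lborel)
    show ?thesis by measurable
  qed
  then have [measurable]: "(\<lambda>s. \<Prod>t\<in>{1..<T}. mvn_density (B *v s t + b) \<Psi> (s (Suc t)))
      \<in> borel_measurable (PiM {1..T} (\<lambda>_. lborel))"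
    by (rule borel_measurable_prod)
  have [measurable]: "(\<lambda>s. s 1) \<in> borel_measurable (PiM {1..T} (\<lambda>_. lborel :: (real^'d) measure))"
    using assms by (auto intro!: measurable_component_lborel)
  show ?thesis unfolding state_density_def[abs_def] by measurable
qed

lemma state_density_nonneg:
  assumes "diag_mat \<Phi>" "\<forall>i. \<Phi> $ i $ i > 0" "diag_mat \<Psi>" "\<forall>i. \<Psi> $ i $ i > 0"
  shows "0 \<le> state_density T m \<Phi> B b \<Psi> s"
  unfolding state_density_def
  using mvn_density_nonneg[OF assms(1,2)] mvn_density_nonneg[OF assms(3,4)] by (simp add: prod_nonneg)

lemma state_density_Suc:
  assumes "1 \<le> T"
  shows "state_density (Suc T) m \<Phi> B b \<Psi> (s(Suc T := y))
       = state_density T m \<Phi> B b \<Psi> s * mvn_density (B *v s T + b) \<Psi> y"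
proof -
  have "{1..<Suc T} = insert T {1..<T}" using assms by auto
  then show ?thesis using assms by (simp add: state_density_def mult_ac)
qed

lemma nn_integral_state_density_Suc:
  fixes m b a c :: "real^'d" and \<Phi> B \<Psi> :: "real^'d^'d"
  assumes \<Phi>: "diag_mat \<Phi>" "\<forall>i. \<Phi> $ i $ i > 0" and \<Psi>: "diag_mat \<Psi>" "\<forall>i. \<Psi> $ i $ i > 0"
    and T: "2 \<le> T"
  shows "(\<integral>\<^sup>+ s. ennreal (state_density (Suc T) m \<Phi> B b \<Psi> s * exp (a \<bullet> s 1 + c \<bullet> s 2)) \<partial>PiM {1..Suc T} (\<lambda>_. lborel))
       = (\<integral>\<^sup>+ s. ennreal (state_density T m \<Phi> B b \<Psi> s * exp (a \<bullet> s 1 + c \<bullet> s 2)) \<partial>PiM {1..T} (\<lambda>_. lborel))"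
proof -
  interpret product_sigma_finite "\<lambda>_::nat. lborel :: (real^'d) measure" by standard
  have [measurable]: "(\<lambda>s. s 1) \<in> borel_measurable (PiM {1..Suc T} (\<lambda>_. lborel :: (real^'d) measure))"
    "(\<lambda>s. s 2) \<in> borel_measurable (PiM {1..Suc T} (\<lambda>_. lborel :: (real^'d) measure))"
    using T by (auto intro!: measurable_component_lborel)
  have [measurable]: "state_density (Suc T) m \<Phi> B b \<Psi> \<in> borel_measurable (PiM {1..Suc T} (\<lambda>_. lborel))"
    by (rule borel_measurable_state_density) simp
  have last: "(\<integral>\<^sup>+ y. ennreal (state_density (Suc T) m \<Phi> B b \<Psi> (s(Suc T := y))
        * exp (a \<bullet> (s(Suc T := y)) 1 + c \<bullet> (s(Suc T := y)) 2)) \<partial>lborel)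
      = ennreal (state_density T m \<Phi> B b \<Psi> s * exp (a \<bullet> s 1 + c \<bullet> s 2))" for s
  proof -
    have "(\<integral>\<^sup>+ y. ennreal (state_density (Suc T) m \<Phi> B b \<Psi> (s(Suc T := y))
        * exp (a \<bullet> (s(Suc T := y)) 1 + c \<bullet> (s(Suc T := y)) 2)) \<partial>lborel)
      = (\<integral>\<^sup>+ y. ennreal (state_density T m \<Phi> B b \<Psi> s * exp (a \<bullet> s 1 + c \<bullet> s 2))
          * ennreal (mvn_density (B *v s T + b) \<Psi> y) \<partial>lborel)"
      using T state_density_nonneg[OF \<Phi> \<Psi>] mvn_density_nonneg[OF \<Psi>]
      by (simp add: state_density_Suc ennreal_mult[symmetric] mult_ac)
    also have "\<dots> = ennreal (state_density T m \<Phi> B b \<Psi> s * exp (a \<bullet> s 1 + c \<bullet> s 2))"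
      by (simp add: nn_integral_cmult nn_integral_mvn_density[OF \<Psi>])
    finally show ?thesis .
  qed
  have [measurable]: "(\<lambda>s. ennreal (state_density (Suc T) m \<Phi> B b \<Psi> s * exp (a \<bullet> s 1 + c \<bullet> s 2)))
      \<in> borel_measurable (PiM {1..Suc T} (\<lambda>_. lborel))"
    by measurable
  moreover have "{1..Suc T} = insert (Suc T) {1..T}" by auto
  ultimately have "(\<integral>\<^sup>+ s. ennreal (state_density (Suc T) m \<Phi> B b \<Psi> s * exp (a \<bullet> s 1 + c \<bullet> s 2))
        \<partial>PiM {1..Suc T} (\<lambda>_. lborel))
      = (\<integral>\<^sup>+ s. \<integral>\<^sup>+ y. ennreal (state_density (Suc T) m \<Phi> B b \<Psi> (s(Suc T := y))
        * exp (a \<bullet> (s(Suc T := y)) 1 + c \<bullet> (s(Suc T := y)) 2)) \<partial>lborel \<partial>PiM {1..T} (\<lambda>_. lborel))"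
    by (simp add: product_nn_integral_insert)
  then show ?thesis by (simp only: last)
qed

lemma nn_integral_second_state:
  fixes m b a c :: "real^'d" and \<Phi> B \<Psi> :: "real^'d^'d" and s :: "nat \<Rightarrow> real^'d"
  assumes \<Phi>: "diag_mat \<Phi>" "\<forall>i. \<Phi> $ i $ i > 0" and \<Psi>: "diag_mat \<Psi>" "\<forall>i. \<Psi> $ i $ i > 0"
  shows "(\<integral>\<^sup>+ y. ennreal (state_density 2 m \<Phi> B b \<Psi> (s(2 := y))
      * exp (a \<bullet> (s(2 := y)) 1 + c \<bullet> (s(2 := y)) 2)) \<partial>lborel)
    = ennreal (exp (gauss_cgf b \<Psi> c)) * ennreal (mvn_density m \<Phi> (s 1) * exp ((a + c v* B) \<bullet> s 1))"
proof -
  have "{1..<2::nat} = {1}" by auto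
  then have "state_density 2 m \<Phi> B b \<Psi> (s(2 := y)) * exp (a \<bullet> (s(2 := y)) 1 + c \<bullet> (s(2 := y)) 2)
      = (mvn_density m \<Phi> (s 1) * exp (a \<bullet> s 1)) * (mvn_density (B *v s 1 + b) \<Psi> y * exp (c \<bullet> y))" for y
    by (simp add: state_density_def exp_add mult_ac)
  then have "(\<integral>\<^sup>+ y. ennreal (state_density 2 m \<Phi> B b \<Psi> (s(2 := y))
      * exp (a \<bullet> (s(2 := y)) 1 + c \<bullet> (s(2 := y)) 2)) \<partial>lborel)
    = ennreal (mvn_density m \<Phi> (s 1) * exp (a \<bullet> s 1))
        * (\<integral>\<^sup>+ y. ennreal (mvn_density (B *v s 1 + b) \<Psi> y * exp (c \<bullet> y)) \<partial>lborel)"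
    using mvn_density_nonneg[OF \<Phi>] mvn_density_nonneg[OF \<Psi>] by (simp add: ennreal_mult nn_integral_cmult)
  also have "\<dots> = ennreal (mvn_density m \<Phi> (s 1) * exp (a \<bullet> s 1)) * ennreal (exp (gauss_cgf (B *v s 1 + b) \<Psi> c))"
    by (simp add: nn_integral_mvn_density_exp[OF \<Psi>])
  also have "\<dots> = ennreal (exp (gauss_cgf b \<Psi> c)) * ennreal (mvn_density m \<Phi> (s 1) * exp ((a + c v* B) \<bullet> s 1))"
  proof -
    have "gauss_cgf (B *v s 1 + b) \<Psi> c = gauss_cgf b \<Psi> c + (c v* B) \<bullet> s 1"
      by (simp add: gauss_cgf_def dot_lmul_matrix inner_add_right)
    then show ?thesis
      using mvn_density_nonneg[OF \<Phi>] by (simp add: ennreal_mult[symmetric] exp_add inner_add_left mult_ac)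
  qed
  finally show ?thesis .
qed

lemma state_mgf_two:
  fixes m b a c :: "real^'d" and \<Phi> B \<Psi> :: "real^'d^'d"
  assumes \<Phi>: "diag_mat \<Phi>" "\<forall>i. \<Phi> $ i $ i > 0" and \<Psi>: "diag_mat \<Psi>" "\<forall>i. \<Psi> $ i $ i > 0"
  shows "(\<integral>\<^sup>+ s. ennreal (state_density 2 m \<Phi> B b \<Psi> s * exp (a \<bullet> s 1 + c \<bullet> s 2)) \<partial>PiM {1..2} (\<lambda>_. lborel))
       = ennreal (exp (gauss_cgf b \<Psi> c + gauss_cgf m \<Phi> (a + c v* B)))"
proof -
  interpret product_sigma_finite "\<lambda>_::nat. lborel :: (real^'d) measure" by standard
  have [measurable]: "(\<lambda>s. s 1) \<in> borel_measurable (PiM {1..2::nat} (\<lambda>_. lborel :: (real^'d) measure))"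
    "(\<lambda>s. s 2) \<in> borel_measurable (PiM {1..2::nat} (\<lambda>_. lborel :: (real^'d) measure))"
    by (auto intro!: measurable_component_lborel)
  have [measurable]: "state_density 2 m \<Phi> B b \<Psi> \<in> borel_measurable (PiM {1..2} (\<lambda>_. lborel))"
    by (rule borel_measurable_state_density) simp
  have integrand: "(\<lambda>s. ennreal (state_density 2 m \<Phi> B b \<Psi> s * exp (a \<bullet> s 1 + c \<bullet> s 2)))
      \<in> borel_measurable (PiM {1..2} (\<lambda>_. lborel))"
    by measurable
  have "{1..2::nat} = insert 2 {1}" by auto
  then have "(\<integral>\<^sup>+ s. ennreal (state_density 2 m \<Phi> B b \<Psi> s * exp (a \<bullet> s 1 + c \<bullet> s 2)) \<partial>PiM {1..2} (\<lambda>_. lborel))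
      = (\<integral>\<^sup>+ s. \<integral>\<^sup>+ y. ennreal (state_density 2 m \<Phi> B b \<Psi> (s(2 := y))
        * exp (a \<bullet> (s(2 := y)) 1 + c \<bullet> (s(2 := y)) 2)) \<partial>lborel \<partial>PiM {1::nat} (\<lambda>_. lborel))"
    using integrand by (simp only:) (rule product_nn_integral_insert; simp)
  also have "\<dots> = (\<integral>\<^sup>+ s. ennreal (exp (gauss_cgf b \<Psi> c)) * ennreal (mvn_density m \<Phi> (s 1) * exp ((a + c v* B) \<bullet> s 1))
      \<partial>PiM {1::nat} (\<lambda>_. lborel))"
    by (simp only: nn_integral_second_state[OF \<Phi> \<Psi>])
  also have "\<dots> = (\<integral>\<^sup>+ x. ennreal (exp (gauss_cgf b \<Psi> c)) * ennreal (mvn_density m \<Phi> x * exp ((a + c v* B) \<bullet> x))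
      \<partial>lborel)"
    by (rule product_nn_integral_singleton) simp
  also have "\<dots> = ennreal (exp (gauss_cgf b \<Psi> c)) * ennreal (exp (gauss_cgf m \<Phi> (a + c v* B)))"
    by (simp add: nn_integral_cmult nn_integral_mvn_density_exp[OF \<Phi>])
  finally show ?thesis by (simp add: exp_add ennreal_mult)
qed

lemma state_mgf:
  fixes m b a c :: "real^'d" and \<Phi> B \<Psi> :: "real^'d^'d"
  assumes "diag_mat \<Phi>" "\<forall>i. \<Phi> $ i $ i > 0" "diag_mat \<Psi>" "\<forall>i. \<Psi> $ i $ i > 0"
    and "2 \<le> T"
  shows "(\<integral>\<^sup>+ s. ennreal (state_density T m \<Phi> B b \<Psi> s * exp (a \<bullet> s 1 + c \<bullet> s 2)) \<partial>PiM {1..T} (\<lambda>_. lborel))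
       = ennreal (exp (gauss_cgf b \<Psi> c + gauss_cgf m \<Phi> (a + c v* B)))"
  using \<open>2 \<le> T\<close>
proof (induction T rule: dec_induct)
  case base
  show ?case by (rule state_mgf_two[OF assms(1-4)])
next
  case (step T)
  show ?case unfolding nn_integral_state_density_Suc[OF assms(1-4) step(1)] by (rule step.IH)
qed

lemma obs_law_mgf:
  fixes m b :: "real^'d" and \<Phi> B \<Psi> :: "real^'d^'d" and \<Gamma> :: "real^'d^'k" and u v :: "real^'k"
  assumes "diag_mat \<Phi>" "\<forall>i. \<Phi> $ i $ i > 0" "diag_mat \<Psi>" "\<forall>i. \<Psi> $ i $ i > 0"
    and T: "2 \<le> T"
  shows "(\<integral>\<^sup>+ w. ennreal (exp (u \<bullet> w 1 + v \<bullet> w 2)) \<partial>obs_law T \<Gamma> m \<Phi> B b \<Psi>)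
       = ennreal (exp (gauss_cgf b \<Psi> (v v* \<Gamma>) + gauss_cgf m \<Phi> (u v* \<Gamma> + (v v* \<Gamma>) v* B)))"
proof -
  have [measurable]: "(\<lambda>w. w 1) \<in> borel_measurable (PiM {1..T} (\<lambda>_. borel :: (real^'k) measure))"
    "(\<lambda>w. w 2) \<in> borel_measurable (PiM {1..T} (\<lambda>_. borel :: (real^'k) measure))"
    using T measurable_component_singleton[of _ "{1..T}" "\<lambda>_. borel :: (real^'k) measure"] by auto
  have [measurable]: "(\<lambda>s. s 1) \<in> borel_measurable (PiM {1..T} (\<lambda>_. lborel :: (real^'d) measure))"
    "(\<lambda>s. s 2) \<in> borel_measurable (PiM {1..T} (\<lambda>_. lborel :: (real^'d) measure))"
    using T by (auto intro!: measurable_component_lborel)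
  have [measurable]: "state_density T m \<Phi> B b \<Psi> \<in> borel_measurable (PiM {1..T} (\<lambda>_. lborel))"
    by (rule borel_measurable_state_density) (use T in simp)
  have obs: "(\<lambda>s. \<lambda>t\<in>{1..T}. \<Gamma> *v s t) \<in> measurable (state_law T m \<Phi> B b \<Psi>) (PiM {1..T} (\<lambda>_. borel))"
    unfolding state_law_def measurable_density_eq1
  proof (rule measurable_restrict)
    fix t assume "t \<in> {1..T}"
    then have [measurable]: "(\<lambda>s. s t) \<in> borel_measurable (PiM {1..T} (\<lambda>_. lborel :: (real^'d) measure))"
      by (rule measurable_component_lborel)
    show "(\<lambda>s. \<Gamma> *v s t) \<in> borel_measurable (PiM {1..T} (\<lambda>_. lborel))"
      by measurable
  qed
  have "(\<integral>\<^sup>+ w. ennreal (exp (u \<bullet> w 1 + v \<bullet> w 2)) \<partial>obs_law T \<Gamma> m \<Phi> B b \<Psi>)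
      = (\<integral>\<^sup>+ s. ennreal (exp (u \<bullet> (\<Gamma> *v s 1) + v \<bullet> (\<Gamma> *v s 2))) \<partial>state_law T m \<Phi> B b \<Psi>)"
    unfolding obs_law_def using T by (subst nn_integral_distr[OF obs]) auto
  also have "\<dots> = (\<integral>\<^sup>+ s. ennreal (state_density T m \<Phi> B b \<Psi> s * exp ((u v* \<Gamma>) \<bullet> s 1 + (v v* \<Gamma>) \<bullet> s 2))
      \<partial>PiM {1..T} (\<lambda>_. lborel))"
  proof -
    have "(\<integral>\<^sup>+ s. ennreal (exp (u \<bullet> (\<Gamma> *v s 1) + v \<bullet> (\<Gamma> *v s 2))) \<partial>state_law T m \<Phi> B b \<Psi>)
        = (\<integral>\<^sup>+ s. ennreal (state_density T m \<Phi> B b \<Psi> s) * ennreal (exp (u \<bullet> (\<Gamma> *v s 1) + v \<bullet> (\<Gamma> *v s 2)))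
          \<partial>PiM {1..T} (\<lambda>_. lborel))"
      unfolding state_law_eq_density by (rule nn_integral_density; measurable)
    then show ?thesis
      using state_density_nonneg[OF assms(1-4)] by (simp add: dot_lmul_matrix ennreal_mult)
  qed
  also have "\<dots> = ennreal (exp (gauss_cgf b \<Psi> (v v* \<Gamma>) + gauss_cgf m \<Phi> (u v* \<Gamma> + (v v* \<Gamma>) v* B)))"
    by (rule state_mgf[OF assms])
  finally show ?thesis .
qed

lemma obs_cgf_expansion:
  fixes \<Gamma> :: "real^'d^'k" and \<Phi> B \<Psi> :: "real^'d^'d"
  assumes "transpose \<Phi> = \<Phi>"
  shows "gauss_cgf b \<Psi> (v v* \<Gamma>) + gauss_cgf m \<Phi> (u v* \<Gamma> + (v v* \<Gamma>) v* B)
       = u \<bullet> (\<Gamma> *v m) + v \<bullet> (\<Gamma> *v (b + B *v m))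
         + (u \<bullet> ((\<Gamma> ** \<Phi> ** transpose \<Gamma>) *v u)
            + 2 * (u \<bullet> ((\<Gamma> ** \<Phi> ** transpose B ** transpose \<Gamma>) *v v))
            + v \<bullet> ((\<Gamma> ** (\<Psi> + B ** \<Phi> ** transpose B) ** transpose \<Gamma>) *v v)) / 2"
proof -
  have "v \<bullet> (\<Gamma> *v (B *v (\<Phi> *v (u v* \<Gamma>)))) = u \<bullet> (\<Gamma> *v (\<Phi> *v ((v v* \<Gamma>) v* B)))"
    by (metis assms dot_lmul_matrix inner_commute transpose_matrix_vector)
  then show ?thesis
    by (simp add: gauss_cgf_def dot_lmul_matrix matrix_vector_mul_assoc[symmetric] algebra_simps)
qed

lemma obs_law_eq_imp_moments_eq:
  fixes \<Gamma> \<Gamma>' :: "real^'d^'k" and m b m' b' :: "real^'d" and \<Phi> B \<Psi> \<Phi>' B' \<Psi>' :: "real^'d^'d"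
  assumes \<Phi>: "diag_mat \<Phi>" "\<forall>i. \<Phi> $ i $ i > 0" and \<Psi>: "diag_mat \<Psi>" "\<forall>i. \<Psi> $ i $ i > 0"
    and \<Phi>': "diag_mat \<Phi>'" "\<forall>i. \<Phi>' $ i $ i > 0" and \<Psi>': "diag_mat \<Psi>'" "\<forall>i. \<Psi>' $ i $ i > 0"
    and T: "2 \<le> T" and law: "obs_law T \<Gamma> m \<Phi> B b \<Psi> = obs_law T \<Gamma>' m' \<Phi>' B' b' \<Psi>'"
  shows "\<Gamma> *v m = \<Gamma>' *v m' \<and> \<Gamma> *v (b + B *v m) = \<Gamma>' *v (b' + B' *v m') \<and>
         \<Gamma> ** \<Phi> ** transpose \<Gamma> = \<Gamma>' ** \<Phi>' ** transpose \<Gamma>' \<and>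
         \<Gamma> ** \<Phi> ** transpose B ** transpose \<Gamma> = \<Gamma>' ** \<Phi>' ** transpose B' ** transpose \<Gamma>' \<and>
         \<Gamma> ** (\<Psi> + B ** \<Phi> ** transpose B) ** transpose \<Gamma>
           = \<Gamma>' ** (\<Psi>' + B' ** \<Phi>' ** transpose B') ** transpose \<Gamma>'"
proof (rule linear_quadratic2_coeffs_unique)
  have sym_add: "transpose (X + Y) = X + Y" if "transpose X = X" "transpose Y = Y" for X Y :: "real^'d^'d"
    using that by (simp add: transpose_def vec_eq_iff)
  note sym = diag_mat_transpose[OF \<Phi>(1)] diag_mat_transpose[OF \<Psi>(1)]
    diag_mat_transpose[OF \<Phi>'(1)] diag_mat_transpose[OF \<Psi>'(1)]
  show "transpose (\<Gamma> ** \<Phi> ** transpose \<Gamma>) = \<Gamma> ** \<Phi> ** transpose \<Gamma>"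
    "transpose (\<Gamma>' ** \<Phi>' ** transpose \<Gamma>') = \<Gamma>' ** \<Phi>' ** transpose \<Gamma>'"
    "transpose (\<Gamma> ** (\<Psi> + B ** \<Phi> ** transpose B) ** transpose \<Gamma>) = \<Gamma> ** (\<Psi> + B ** \<Phi> ** transpose B) ** transpose \<Gamma>"
    "transpose (\<Gamma>' ** (\<Psi>' + B' ** \<Phi>' ** transpose B') ** transpose \<Gamma>')
      = \<Gamma>' ** (\<Psi>' + B' ** \<Phi>' ** transpose B') ** transpose \<Gamma>'"
    by (intro symmetric_congruence sym_add sym)+
  fix u v :: "real^'k"
  have "ennreal (exp (gauss_cgf b \<Psi> (v v* \<Gamma>) + gauss_cgf m \<Phi> (u v* \<Gamma> + (v v* \<Gamma>) v* B)))
      = ennreal (exp (gauss_cgf b' \<Psi>' (v v* \<Gamma>') + gauss_cgf m' \<Phi>' (u v* \<Gamma>' + (v v* \<Gamma>') v* B')))"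
    using obs_law_mgf[OF \<Phi> \<Psi> T, where \<Gamma>=\<Gamma> and m=m and B=B and b=b and u=u and v=v]
      obs_law_mgf[OF \<Phi>' \<Psi>' T, where \<Gamma>=\<Gamma>' and m=m' and B=B' and b=b' and u=u and v=v] law
    by simp
  then show "u \<bullet> (\<Gamma> *v m) + v \<bullet> (\<Gamma> *v (b + B *v m))
         + (u \<bullet> ((\<Gamma> ** \<Phi> ** transpose \<Gamma>) *v u)
            + 2 * (u \<bullet> ((\<Gamma> ** \<Phi> ** transpose B ** transpose \<Gamma>) *v v))
            + v \<bullet> ((\<Gamma> ** (\<Psi> + B ** \<Phi> ** transpose B) ** transpose \<Gamma>) *v v)) / 2
       = u \<bullet> (\<Gamma>' *v m') + v \<bullet> (\<Gamma>' *v (b' + B' *v m'))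
         + (u \<bullet> ((\<Gamma>' ** \<Phi>' ** transpose \<Gamma>') *v u)
            + 2 * (u \<bullet> ((\<Gamma>' ** \<Phi>' ** transpose B' ** transpose \<Gamma>') *v v))
            + v \<bullet> ((\<Gamma>' ** (\<Psi>' + B' ** \<Phi>' ** transpose B') ** transpose \<Gamma>') *v v)) / 2"
    by (simp add: obs_cgf_expansion[symmetric] sym)
qed

section \<open>Identification\<close>

lemma full_rank_congruent_factor:
  fixes \<Gamma> \<Gamma>' :: "real^'d^'k" and \<Phi> \<Phi>' :: "real^'d^'d"
  assumes rank: "rank \<Gamma> = CARD('d)" "rank \<Gamma>' = CARD('d)" and "invertible \<Phi>'"
    and eq: "\<Gamma> ** \<Phi> ** transpose \<Gamma> = \<Gamma>' ** \<Phi>' ** transpose \<Gamma>'"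
  obtains C where "invertible C" "\<Gamma>' = \<Gamma> ** C"
proof -
  obtain L where L: "L ** \<Gamma> = mat 1" using full_rank_left_inverse[OF rank(1)] .
  have range: "\<exists>z. \<Gamma>' *v x = \<Gamma> *v z" for x
  proof -
    (* the column space of \<Gamma>' is that of \<Gamma>'\<Phi>'\<Gamma>'^T = \<Gamma>\<Phi>\<Gamma>^T *)
    have "surj ((*v) (transpose \<Gamma>'))"
      using rank(2) by (simp add: full_rank_surjective[symmetric] rank_transpose del: transpose_matrix_vector)
    then obtain y where y: "matrix_inv \<Phi>' *v x = transpose \<Gamma>' *v y"
      by (metis surjD)
    have "\<Gamma>' *v x = \<Gamma>' *v (\<Phi>' *v (matrix_inv \<Phi>' *v x))"
      by (simp add: matrix_vector_mul_assoc matrix_inv_works[OF \<open>invertible \<Phi>'\<close>])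
    also have "\<dots> = (\<Gamma>' ** \<Phi>' ** transpose \<Gamma>') *v y"
      by (simp only: y matrix_vector_mul_assoc matrix_mul_assoc)
    also have "\<dots> = \<Gamma> *v ((\<Phi> ** transpose \<Gamma>) *v y)"
      by (simp only: eq[symmetric] matrix_vector_mul_assoc matrix_mul_assoc)
    finally show ?thesis ..
  qed
  have factor: "\<Gamma>' = \<Gamma> ** (L ** \<Gamma>')"
  proof -
    have "\<Gamma> *v (L *v (\<Gamma>' *v x)) = \<Gamma>' *v x" for x
    proof -
      obtain z where z: "\<Gamma>' *v x = \<Gamma> *v z" using range by blast
      have "L *v (\<Gamma> *v z) = z" using L by (simp add: matrix_vector_mul_assoc)
      then show ?thesis by (simp add: z)
    qed
    then show ?thesis by (simp add: matrix_eq matrix_vector_mul_assoc)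
  qed
  have "inj ((*v) (L ** \<Gamma>'))"
  proof (rule injI)
    fix x y assume "(L ** \<Gamma>') *v x = (L ** \<Gamma>') *v y"
    then have "\<Gamma>' *v x = \<Gamma>' *v y"
      by (subst (1 2) factor) (simp add: matrix_vector_mul_assoc[symmetric])
    then show "x = y" using full_rank_injective[of \<Gamma>'] rank(2) by (simp add: inj_eq)
  qed
  then have "invertible (L ** \<Gamma>')"
    using matrix_left_invertible_injective invertible_left_inverse by blast
  with factor show ?thesis using that by blast
qed

lemma cross_covariance_intertwines:
  fixes B B' C \<Phi> \<Phi>' :: "real^'d^'d"
  assumes "invertible C" "invertible \<Phi>'"
    and \<Phi>: "\<Phi> = C ** \<Phi>' ** transpose C"
    and \<Phi>B: "\<Phi> ** transpose B = C ** (\<Phi>' ** transpose B') ** transpose C"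
  shows "B ** C = C ** B'"
proof -
  obtain F where F: "F ** (C ** \<Phi>') = mat 1"
    using invertible_mult[OF assms(1,2)] invertible_left_inverse by blast
  have "C ** \<Phi>' ** (transpose C ** transpose B) = C ** \<Phi>' ** (transpose B' ** transpose C)"
    using \<Phi>B by (simp add: \<Phi> matrix_mul_assoc)
  then have "transpose C ** transpose B = transpose B' ** transpose C"
    by (metis F matrix_mul_assoc matrix_mul_lid)
  then show ?thesis by (metis matrix_transpose_mul transpose_transpose)
qed

lemma moment_equations_imp_similar:
  fixes \<Gamma> \<Gamma>' :: "real^'d^'k" and m b m' b' :: "real^'d" and \<Phi> B \<Psi> \<Phi>' B' \<Psi>' :: "real^'d^'d"
  assumes rank: "rank \<Gamma> = CARD('d)" "rank \<Gamma>' = CARD('d)" and "invertible \<Phi>'"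
    and moments: "\<Gamma> *v m = \<Gamma>' *v m' \<and> \<Gamma> *v (b + B *v m) = \<Gamma>' *v (b' + B' *v m') \<and>
         \<Gamma> ** \<Phi> ** transpose \<Gamma> = \<Gamma>' ** \<Phi>' ** transpose \<Gamma>' \<and>
         \<Gamma> ** \<Phi> ** transpose B ** transpose \<Gamma> = \<Gamma>' ** \<Phi>' ** transpose B' ** transpose \<Gamma>' \<and>
         \<Gamma> ** (\<Psi> + B ** \<Phi> ** transpose B) ** transpose \<Gamma>
           = \<Gamma>' ** (\<Psi>' + B' ** \<Phi>' ** transpose B') ** transpose \<Gamma>'"
  obtains C where "invertible C" "\<Gamma>' = \<Gamma> ** C" "B ** C = C ** B'"
    "\<Phi> = C ** \<Phi>' ** transpose C" "\<Psi> = C ** \<Psi>' ** transpose C" "b = C *v b'" "m = C *v m'"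
proof -
  obtain C where C: "invertible C" and \<Gamma>': "\<Gamma>' = \<Gamma> ** C"
    using full_rank_congruent_factor[OF rank \<open>invertible \<Phi>'\<close>] moments by blast
  obtain L where L: "L ** \<Gamma> = mat 1" using full_rank_left_inverse[OF rank(1)] .
  have inj: "inj ((*v) \<Gamma>)" using full_rank_injective rank(1) by blast
  have congr: "\<Gamma>' ** M ** transpose \<Gamma>' = \<Gamma> ** (C ** M ** transpose C) ** transpose \<Gamma>" for M
    by (simp add: \<Gamma>' matrix_transpose_mul matrix_mul_assoc)
  have \<Phi>: "\<Phi> = C ** \<Phi>' ** transpose C"
    by (rule congruence_cancel[OF L]) (use moments congr in simp)
  have \<Phi>B: "\<Phi> ** transpose B = C ** (\<Phi>' ** transpose B') ** transpose C"
    by (rule congruence_cancel[OF L]) (use moments congr[of "\<Phi>' ** transpose B'"] in \<open>simp add: matrix_mul_assoc\<close>)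
  have \<Psi>B\<Phi>B: "\<Psi> + B ** \<Phi> ** transpose B = C ** (\<Psi>' + B' ** \<Phi>' ** transpose B') ** transpose C"
    by (rule congruence_cancel[OF L]) (use moments congr in simp)
  have m: "m = C *v m'"
    using moments inj by (metis \<Gamma>' injD matrix_vector_mul_assoc)
  have bBm: "b + B *v m = C *v (b' + B' *v m')"
    using moments inj by (metis \<Gamma>' injD matrix_vector_mul_assoc)
  have BC: "B ** C = C ** B'"
    using C \<open>invertible \<Phi>'\<close> \<Phi> \<Phi>B by (rule cross_covariance_intertwines)
  have \<Psi>: "\<Psi> = C ** \<Psi>' ** transpose C"
  proof -
    have "B ** \<Phi> ** transpose B = (B ** C) ** \<Phi>' ** transpose (B ** C)"
      by (simp add: \<Phi> matrix_transpose_mul matrix_mul_assoc)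
    also have "\<dots> = C ** (B' ** \<Phi>' ** transpose B') ** transpose C"
      by (simp add: BC matrix_transpose_mul matrix_mul_assoc)
    finally show ?thesis
      using \<Psi>B\<Phi>B by (simp add: matrix_add_ldistrib matrix_add_rdistrib matrix_mul_assoc)
  qed
  have b: "b = C *v b'"
  proof -
    have "C *v (B' *v m') = B *v m"
      by (simp add: m matrix_vector_mul_assoc BC)
    then show ?thesis using bBm by (simp add: matrix_vector_right_distrib)
  qed
  show ?thesis using that C \<Gamma>' BC \<Phi> \<Psi> b m by blast
qed

lemma diagonal_intertwiner_monomial:
  fixes B B' C :: "real^'d^'d"
  assumes B: "diag_mat B" "\<forall>i j. i \<noteq> j \<longrightarrow> B $ i $ i \<noteq> B $ j $ j" and B': "diag_mat B'"
    and BC: "B ** C = C ** B'" and C: "invertible C"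
  obtains P D where "perm_mat P" "diag_mat D" "invertible D" "C = P ** matrix_inv D"
proof -
  have eigen: "B $ i $ i = B' $ j $ j" if "C $ i $ j \<noteq> 0" for i j
    using that arg_cong[OF BC, of "\<lambda>M. M $ i $ j"]
    by (simp add: diag_mat_mult_left[OF B(1)] diag_mat_mult_right[OF B'])
  define p where "p j = (SOME i. C $ i $ j \<noteq> 0)" for j
  have support: "C $ i $ j \<noteq> 0 \<longleftrightarrow> i = p j" for i j
  proof -
    have "C $ p j $ j \<noteq> 0"
      unfolding p_def by (rule someI_ex[OF invertible_column_nonzero[OF C]])
    moreover have "i = p j" if "C $ i $ j \<noteq> 0"
      using eigen[OF that] eigen[OF \<open>C $ p j $ j \<noteq> 0\<close>] B(2) by metis
    ultimately show ?thesis by blast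
  qed
  have "surj p"
    unfolding surj_def
  proof
    fix i
    obtain j where "transpose C $ j $ i \<noteq> 0"
      using invertible_column_nonzero[OF transpose_invertible[OF C]] by blast
    then show "\<exists>j. i = p j" using support by (auto simp: transpose_def)
  qed
  then have "bij p" by (simp add: bij_def finite_UNIV_surj_inj)
  then have p: "p permutes UNIV" by (rule bij_imp_permutes) simp
  define P :: "real^'d^'d" where "P = (\<chi> i j. if i = p j then 1 else 0)"
  define D :: "real^'d^'d" where "D = (\<chi> i j. if i = j then 1 / C $ p j $ j else 0)"
  have D: "diag_mat D" "\<forall>i. D $ i $ i \<noteq> 0"
    using support by (auto simp: D_def diag_mat_def)
  have "matrix_inv D = (\<chi> i j. if i = j then C $ p j $ j else 0)"
    unfolding matrix_inv_diag_mat[OF D] by (simp add: D_def fun_eq_iff)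
  then have "(P ** matrix_inv D) $ i $ j = C $ i $ j" for i j
    using support[of i j] by (auto simp: diag_mat_mult_right diag_mat_def P_def)
  then have "C = P ** matrix_inv D" by (simp add: vec_eq_iff)
  moreover have "perm_mat P" using p by (auto simp: perm_mat_def P_def)
  ultimately show ?thesis using that D invertible_diag_mat by blast
qed

lemma monomial_similarity_params:
  fixes \<Gamma> \<Gamma>' :: "real^'d^'k" and m b m' b' :: "real^'d" and \<Phi> B \<Psi> \<Phi>' B' \<Psi>' P D :: "real^'d^'d"
  assumes P: "perm_mat P" and D: "diag_mat D" "invertible D" and C: "C = P ** matrix_inv D"
    and \<Gamma>': "\<Gamma>' = \<Gamma> ** C" and BC: "B ** C = C ** B'"
    and \<Phi>: "\<Phi> = C ** \<Phi>' ** transpose C" and \<Psi>: "\<Psi> = C ** \<Psi>' ** transpose C"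
    and b: "b = C *v b'" and m: "m = C *v m'"
  shows "\<Gamma>' = \<Gamma> ** P ** matrix_inv D \<and>
         B' = D ** transpose P ** B ** P ** matrix_inv D \<and>
         \<Phi>' = D ** transpose P ** \<Phi> ** P ** D \<and>
         \<Psi>' = D ** transpose P ** \<Psi> ** P ** D \<and>
         b' = (D ** transpose P) *v b \<and>
         m' = (D ** transpose P) *v m"
proof -
  define K where "K = D ** transpose P"
  have KC: "K ** C = mat 1"
  proof -
    have "K ** C = D ** (transpose P ** P) ** matrix_inv D"
      by (simp add: K_def C matrix_mul_assoc)
    then show ?thesis
      by (simp add: perm_mat_transpose_mult[OF P] matrix_inv_works[OF D(2)])
  qed
  have K_transpose: "transpose K = P ** D"
    by (simp add: K_def matrix_transpose_mul diag_mat_transpose[OF D(1)])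
  have congr: "X' = K ** X ** transpose K" if "X = C ** X' ** transpose C" for X X'
  proof -
    have "K ** X ** transpose K = (K ** C) ** X' ** transpose (K ** C)"
      by (simp add: that matrix_transpose_mul matrix_mul_assoc)
    then show ?thesis by (simp add: KC)
  qed
  have vec: "x' = K *v x" if "x = C *v x'" for x x'
    by (simp add: that matrix_vector_mul_assoc KC)
  have "B' = K ** B ** C"
    by (simp add: matrix_mul_assoc[symmetric] BC) (simp add: matrix_mul_assoc KC)
  then show ?thesis
    using congr[OF \<Phi>, unfolded K_transpose] congr[OF \<Psi>, unfolded K_transpose] vec[OF b] vec[OF m]
    by (simp add: \<Gamma>' C K_def matrix_mul_assoc)
qed

theorem mainTheorem7:
  fixes T :: nat
    and \<Gamma> \<Gamma>' :: "real^'d^'k"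
    and m b m' b' :: "real^'d"
    and \<Phi> B \<Psi> \<Phi>' B' \<Psi>' :: "real^'d^'d"
  assumes "CARD('d) \<le> CARD('k)"
    and "T \<ge> 2"
    and "diag_mat B" "\<forall>i. B $ i $ i \<noteq> 0" "\<forall>i j. i \<noteq> j \<longrightarrow> B $ i $ i \<noteq> B $ j $ j"
    and "diag_mat \<Phi>" "\<forall>i. \<Phi> $ i $ i > 0"
    and "diag_mat \<Psi>" "\<forall>i. \<Psi> $ i $ i > 0"
    and "rank \<Gamma> = CARD('d)"
    and "diag_mat B'" "\<forall>i. B' $ i $ i \<noteq> 0"
    and "diag_mat \<Phi>'" "\<forall>i. \<Phi>' $ i $ i > 0"
    and "diag_mat \<Psi>'" "\<forall>i. \<Psi>' $ i $ i > 0"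
    and "rank \<Gamma>' = CARD('d)"
    and "obs_law T \<Gamma> m \<Phi> B b \<Psi> = obs_law T \<Gamma>' m' \<Phi>' B' b' \<Psi>'"
  shows "\<exists>P D. perm_mat P \<and> diag_mat D \<and> invertible D \<and>
           \<Gamma>' = \<Gamma> ** P ** matrix_inv D \<and>
           B' = D ** transpose P ** B ** P ** matrix_inv D \<and>
           \<Phi>' = D ** transpose P ** \<Phi> ** P ** D \<and>
           \<Psi>' = D ** transpose P ** \<Psi> ** P ** D \<and>
           b' = (D ** transpose P) *v b \<and>
           m' = (D ** transpose P) *v m"
proof -
  have "invertible \<Phi>'"
    using assms(13,14) by (intro invertible_diag_mat) (auto simp: less_imp_neq[symmetric])
  moreover note moments = obs_law_eq_imp_moments_eq[OF assms(6-9,13-16,2,18)]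
  ultimately obtain C where C: "invertible C" "\<Gamma>' = \<Gamma> ** C" "B ** C = C ** B'"
    "\<Phi> = C ** \<Phi>' ** transpose C" "\<Psi> = C ** \<Psi>' ** transpose C" "b = C *v b'" "m = C *v m'"
    using moment_equations_imp_similar[OF assms(10,17)] by blast
  obtain P D where "perm_mat P" "diag_mat D" "invertible D" "C = P ** matrix_inv D"
    using diagonal_intertwiner_monomial[OF assms(3,5,11) C(3,1)] by blast
  with monomial_similarity_params[OF this C(2-7)] show ?thesis by blast
qed

end
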